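(* Let $t,x\in\mathbb{C}$ with $x\ne t$, $t\notin\{0,1\}$ and $x\notin\{0,1\}$. For $s\in\mathbb{C}\setminus\{0,1,x\}$ let $$g(s)=\begin{pmatrix}-(s-1)x & ts(s-1)\\ -(s-x) & s(s-x)\end{pmatrix}\in\mathrm{PGL}_2(\mathbb{C}).$$ Then the elements $g(s)$, $s\in\mathbb{C}\setminus\{0,1,x\}$, generate a dense subgroup of $\mathrm{PGL}_2(\mathbb{C})$. *)

theory Defs
  imports "HOL-Analysis.Analysis"
begin

type_synonym cmat2 = "complex^2^2"

definition gmat :: "complex \<Rightarrow> complex \<Rightarrow> complex \<Rightarrow> cmat2" where
  "gmat t x z = (\<chi> i j. if i = 1 then (if j = 1 then -(z-1)*x else t*z*(z-1))
                                 else (if j = 1 then -(z-x) else z*(z-x)))"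

definition GL2 :: "cmat2 set" where
  "GL2 = {A. invertible A}"

inductive_set gen_subgroup :: "cmat2 set \<Rightarrow> cmat2 set" for S where
  unit: "mat 1 \<in> gen_subgroup S"
| gen: "g \<in> S \<Longrightarrow> g \<in> gen_subgroup S"
| mult: "a \<in> gen_subgroup S \<Longrightarrow> b \<in> gen_subgroup S \<Longrightarrow> a ** b \<in> gen_subgroup S"
| inv: "a \<in> gen_subgroup S \<Longrightarrow> matrix_inv a \<in> gen_subgroup S"

definition proj_rel :: "(cmat2 \<times> cmat2) set" where
  "proj_rel = {(A, B). A \<in> GL2 \<and> B \<in> GL2 \<and> (\<exists>c::complex. c \<noteq> 0 \<and> B = mat c ** A)}"

definition PGL2 :: "cmat2 set set" where
  "PGL2 = GL2 // proj_rel"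

definition proj :: "cmat2 \<Rightarrow> cmat2 set" where
  "proj A = proj_rel `` {A}"

definition PGL2_top :: "cmat2 set topology" where
  "PGL2_top = topology (\<lambda>U. U \<subseteq> PGL2 \<and> openin (top_of_set GL2) (\<Union>U))"

end

(* Write t = x (l^2 - l + 1) / l, which is possible since l can be taken as a root of the quadratic
   x l^2 - (t + x) l + x. For a parameter a, the word g(a/l) g(a)^(-1) g(b), with b a suitable
   rational function of a, is diagonal, and the ratio of its diagonal entries is a non-constant
   rational function of a. It therefore takes all but finitely many values, and as a cofinite
   subset of the multiplicative group of C generates it, the image of the group generated by the
   g(s) contains the whole diagonal torus. Words in g(t), whose entries are all nonzero, and the
   torus yield a non-diagonal upper triangular element, hence all unipotent upper triangular
   elements, and then the Bruhat decomposition gives all of PGL(2, C). So the group is not only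
   dense but all of PGL(2, C). *)

theory Submission
  imports
    Defs
    "HOL-Computational_Algebra.Fundamental_Theorem_Algebra"
    "HOL-Computational_Algebra.Polynomial_Factorial"
    "HOL-Computational_Algebra.Field_as_Ring"
begin

definition mat2 :: "complex \<Rightarrow> complex \<Rightarrow> complex \<Rightarrow> complex \<Rightarrow> cmat2" where
  "mat2 a b c d = (\<chi> i j. if i = 1 then (if j = 1 then a else b) else (if j = 1 then c else d))"

lemma mat2_nth [simp]:
  "mat2 a b c d $ 1 $ 1 = a" "mat2 a b c d $ 1 $ 2 = b"
  "mat2 a b c d $ 2 $ 1 = c" "mat2 a b c d $ 2 $ 2 = d"
  by (simp_all add: mat2_def)

lemma mat2_entries: "mat2 (A$1$1) (A$1$2) (A$2$1) (A$2$2) = A"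
  unfolding vec_eq_iff forall_2 by simp

lemma mat2_cases:
  obtains a b c d where "A = mat2 a b c d"
  using mat2_entries by metis

lemma mat2_eq_iff [simp]:
  "mat2 a b c d = mat2 a' b' c' d' \<longleftrightarrow> a = a' \<and> b = b' \<and> c = c' \<and> d = d'"
  by (metis mat2_nth)

lemma mat2_mult [simp]:
  "mat2 a b c d ** mat2 a' b' c' d' = mat2 (a*a' + b*c') (a*b' + b*d') (c*a' + d*c') (c*b' + d*d')"
  unfolding vec_eq_iff forall_2 by (simp add: matrix_matrix_mult_def sum_2)

lemma mat_eq_mat2: "mat k = mat2 k 0 0 k"
  unfolding vec_eq_iff forall_2 by (simp add: mat_def)

lemma mat_mult_mat_mult: "mat c ** (mat d ** A) = mat (c * d) ** (A :: cmat2)"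
  by (cases A rule: mat2_cases) (simp add: mat_eq_mat2)

lemma mat_scalar_mult_mult: "(mat k ** A) ** (mat l ** B) = mat (k * l) ** (A ** B)"
  for A B :: cmat2
  by (cases A rule: mat2_cases, cases B rule: mat2_cases) (simp add: mat_eq_mat2 algebra_simps)

lemma det_mat2: "det (mat2 a b c d) = a*d - b*c"
  by (simp add: det_2)

lemma gmat_eq_mat2: "gmat t x s = mat2 (-(s-1)*x) (t * s * (s-1)) (-(s-x)) (s * (s-x))"
  unfolding vec_eq_iff forall_2 by (simp add: gmat_def)

lemma det_gmat: "det (gmat t x s) = s*(s-1)*(s-x)*(t-x)"
  unfolding gmat_eq_mat2 det_mat2 by (simp add: algebra_simps)

lemma matrix_inv_eqI:
  fixes A B :: "'a::semiring_1^'n^'n"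
  assumes "A ** B = mat 1" "B ** A = mat 1"
  shows "matrix_inv A = B"
proof -
  have inv: "A ** matrix_inv A = mat 1 \<and> matrix_inv A ** A = mat 1"
    unfolding matrix_inv_def by (rule someI[of _ B]) (use assms in simp)
  have "matrix_inv A = matrix_inv A ** (A ** B)"
    by (simp add: assms(1) matrix_mul_rid)
  also have "\<dots> = B"
    by (simp add: inv matrix_mul_assoc matrix_mul_lid)
  finally show ?thesis .
qed

lemma matrix_inv_mat2:
  assumes "a*d - b*c \<noteq> 0"
  shows "matrix_inv (mat2 a b c d) = mat (1 / (a*d - b*c)) ** mat2 d (-b) (-c) a"
proof (rule matrix_inv_eqI)
  let ?\<delta> = "a*d - b*c"
  have "a * d / ?\<delta> - b * c / ?\<delta> = 1"
    using assms by (simp add: diff_divide_distrib[symmetric])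
  then show "mat2 a b c d ** (mat (1 / ?\<delta>) ** mat2 d (-b) (-c) a) = mat 1"
       and "mat (1 / ?\<delta>) ** mat2 d (-b) (-c) a ** mat2 a b c d = mat 1"
    by (simp_all add: mat_eq_mat2 algebra_simps)
qed

text \<open>The preimage, among all 2 \<times> 2 matrices, of the image of \<^term>\<open>gen_subgroup S\<close> in PGL(2, \<complex>).\<close>

definition proj_gen_subgroup :: "cmat2 set \<Rightarrow> cmat2 set" where
  "proj_gen_subgroup S = {A. \<exists>k. k \<noteq> 0 \<and> mat k ** A \<in> gen_subgroup S}"

lemma proj_gen_subgroup_gen: "g \<in> S \<Longrightarrow> g \<in> proj_gen_subgroup S"
  unfolding proj_gen_subgroup_def
  by (auto intro!: exI[of _ 1] gen_subgroup.gen simp: matrix_mul_lid)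

lemma proj_gen_subgroup_scale:
  assumes "mat k ** A \<in> proj_gen_subgroup S" "k \<noteq> 0"
  shows "A \<in> proj_gen_subgroup S"
proof -
  obtain k' where "k' \<noteq> 0" "mat k' ** (mat k ** A) \<in> gen_subgroup S"
    using assms(1) unfolding proj_gen_subgroup_def by blast
  then show ?thesis
    unfolding proj_gen_subgroup_def matrix_mul_assoc mat_eq_mat2
    using assms(2) by (intro CollectI exI[of _ "k' * k"]) simp
qed

lemma proj_gen_subgroup_cong:
  assumes "mat2 a b c d \<in> proj_gen_subgroup S" "k \<noteq> 0"
    and "a = k*a'" "b = k*b'" "c = k*c'" "d = k*d'"
  shows "mat2 a' b' c' d' \<in> proj_gen_subgroup S"
  using proj_gen_subgroup_scale[of k "mat2 a' b' c' d'" S] assms by (simp add: mat_eq_mat2)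

lemma proj_gen_subgroup_mult:
  assumes "A \<in> proj_gen_subgroup S" "B \<in> proj_gen_subgroup S"
  shows "A ** B \<in> proj_gen_subgroup S"
proof -
  obtain k l where kl: "k \<noteq> 0" "l \<noteq> 0"
    and AB: "mat k ** A \<in> gen_subgroup S" "mat l ** B \<in> gen_subgroup S"
    using assms unfolding proj_gen_subgroup_def by blast
  have "(mat k ** A) ** (mat l ** B) \<in> gen_subgroup S"
    using AB by (rule gen_subgroup.mult)
  moreover note mat_scalar_mult_mult[of k A l B]
  ultimately show ?thesis
    unfolding proj_gen_subgroup_def using kl by (intro CollectI exI[of _ "k * l"]) simp
qed

lemma proj_gen_subgroup_adjugate:
  assumes "mat2 a b c d \<in> proj_gen_subgroup S" "a*d - b*c \<noteq> 0"
  shows "mat2 d (-b) (-c) a \<in> proj_gen_subgroup S"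
proof -
  obtain k where k: "k \<noteq> 0" "mat k ** mat2 a b c d \<in> gen_subgroup S"
    using assms(1) unfolding proj_gen_subgroup_def by blast
  have "matrix_inv (mat2 (k*a) (k*b) (k*c) (k*d)) =
        mat (1 / (k * k * (a*d - b*c))) ** mat2 (k*d) (-(k*b)) (-(k*c)) (k*a)"
    using matrix_inv_mat2[of "k*a" "k*d" "k*b" "k*c"] k(1) assms(2) by (simp add: algebra_simps)
  also have "\<dots> = mat (1 / (k * (a*d - b*c))) ** mat2 d (-b) (-c) a"
    using k(1) by (simp add: mat_eq_mat2)
  finally have "mat (1 / (k * (a*d - b*c))) ** mat2 d (-b) (-c) a \<in> gen_subgroup S"
    using gen_subgroup.inv[OF k(2)] by (simp add: mat_eq_mat2)
  then show ?thesis
    unfolding proj_gen_subgroup_def using k(1) assms(2)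
    by (intro CollectI exI[of _ "1 / (k * (a*d - b*c))"]) simp
qed

section \<open>Generating PGL(2) from the diagonal torus\<close>

text \<open>A product X diag(\<alpha>,1) X with vanishing lower left entry is already diagonal; the generic
  middle factor X diag(\<beta>,1) X breaks this symmetry.\<close>

lemma mat2_upper_triangular_word:
  fixes p q r y \<alpha> \<beta> :: complex
  defines "X \<equiv> mat2 p q r y"
  defines "W \<equiv> X ** mat2 \<alpha> 0 0 1 ** (X ** mat2 \<beta> 0 0 1 ** X)"
  assumes \<alpha>: "(\<beta>*p^2 + q*r) * \<alpha> = -y*(\<beta>*p + y)"
  shows "W$2$1 = 0"
    and "(\<beta>*p^2 + q*r) * W$1$2 = q*(q*r - p*y)*(p^2*\<beta>^2 + (q*r + p*y)*\<beta> + y^2)"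
    and "det W = (p*y - q*r)^3 * \<alpha> * \<beta>"
proof -
  define D E where "D = \<beta>*p^2 + q*r" and "E = \<beta>*p + y"
  have D\<alpha>: "D * \<alpha> = -y*E"
    unfolding D_def E_def by (rule \<alpha>)
  have W: "W = X ** mat2 \<alpha> 0 0 1 ** mat2 D (q*E) (r*E) (\<beta>*q*r + y^2)"
    unfolding W_def X_def D_def E_def by (simp add: algebra_simps power2_eq_square)
  have "W$2$1 = r * (D*\<alpha> + y*E)"
    unfolding W X_def by (simp add: algebra_simps)
  then show "W$2$1 = 0"
    by (simp add: D\<alpha>)
  have "D * W$1$2 = p*q*E*(D*\<alpha>) + q*D*(\<beta>*q*r + y^2)"
    unfolding W X_def by (simp add: algebra_simps)
  also have "\<dots> = q*(D*(\<beta>*q*r + y^2) - p*y*E^2)"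
    unfolding D\<alpha> by (simp add: algebra_simps power2_eq_square)
  also have "\<dots> = q*(q*r - p*y)*(p^2*\<beta>^2 + (q*r + p*y)*\<beta> + y^2)"
    unfolding D_def E_def by (simp add: algebra_simps power2_eq_square)
  finally show "(\<beta>*p^2 + q*r) * W$1$2 = q*(q*r - p*y)*(p^2*\<beta>^2 + (q*r + p*y)*\<beta> + y^2)"
    unfolding D_def .
  show "det W = (p*y - q*r)^3 * \<alpha> * \<beta>"
    unfolding W_def X_def det_mul det_mat2 by (simp add: power3_eq_cube)
qed

lemma proj_gen_subgroup_upper_triangular:
  assumes T: "\<And>\<rho>. \<rho> \<noteq> 0 \<Longrightarrow> mat2 \<rho> 0 0 1 \<in> proj_gen_subgroup S"
    and X: "mat2 p q r y \<in> proj_gen_subgroup S"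
    and nz: "p \<noteq> 0" "q \<noteq> 0" "r \<noteq> 0" "y \<noteq> 0" "p*y - q*r \<noteq> 0"
  obtains a b d where "mat2 a b 0 d \<in> proj_gen_subgroup S" "b \<noteq> 0" "a * d \<noteq> 0"
proof -
  have "[:0, 1:] * [:q*r, p^2:] * [:y, p:] * [:y^2, q*r + p*y, p^2:] \<noteq> (0 :: complex poly)"
    using nz by simp
  then obtain \<beta> where "poly ([:0, 1:] * [:q*r, p^2:] * [:y, p:] * [:y^2, q*r + p*y, p^2:]) \<beta> \<noteq> 0"
    using poly_all_0_iff_0 by blast
  then have "poly [:0, 1:] \<beta> \<noteq> 0" "poly [:q*r, p^2:] \<beta> \<noteq> 0" "poly [:y, p:] \<beta> \<noteq> 0"
    "poly [:y^2, q*r + p*y, p^2:] \<beta> \<noteq> 0"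
    unfolding poly_mult by simp_all
  then have \<beta>: "\<beta> \<noteq> 0" "\<beta>*p^2 + q*r \<noteq> 0" "\<beta>*p + y \<noteq> 0" "p^2*\<beta>^2 + (q*r + p*y)*\<beta> + y^2 \<noteq> 0"
    by (simp_all add: algebra_simps power2_eq_square)
  define \<alpha> where "\<alpha> = -y*(\<beta>*p + y) / (\<beta>*p^2 + q*r)"
  have \<alpha>: "\<alpha> \<noteq> 0" "(\<beta>*p^2 + q*r) * \<alpha> = -y*(\<beta>*p + y)"
    unfolding \<alpha>_def using nz \<beta> by simp_all
  define W where "W = mat2 p q r y ** mat2 \<alpha> 0 0 1 ** (mat2 p q r y ** mat2 \<beta> 0 0 1 ** mat2 p q r y)"
  have "W \<in> proj_gen_subgroup S"
    unfolding W_def using X T \<alpha>(1) \<beta>(1) by (intro proj_gen_subgroup_mult)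
  moreover have "W$2$1 = 0" "W$1$2 \<noteq> 0" "det W \<noteq> 0"
    using mat2_upper_triangular_word[OF \<alpha>(2), folded W_def] nz \<alpha>(1) \<beta> by auto
  ultimately show ?thesis
    using that[of "W$1$1" "W$1$2" "W$2$2"] mat2_entries[of W] by (simp add: det_2)
qed

lemma proj_gen_subgroup_unipotent:
  assumes T: "\<And>\<rho>. \<rho> \<noteq> 0 \<Longrightarrow> mat2 \<rho> 0 0 1 \<in> proj_gen_subgroup S"
    and W: "mat2 a b 0 d \<in> proj_gen_subgroup S" "b \<noteq> 0" "a * d \<noteq> 0"
  shows "mat2 1 \<gamma> 0 1 \<in> proj_gen_subgroup S"
proof (cases "\<gamma> = 0")
  case True
  then show ?thesis using T[of 1] by simp
next
  case False
  have "mat2 (d/a) 0 0 1 ** mat2 a b 0 d \<in> proj_gen_subgroup S"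
    using W T[of "d/a"] by (intro proj_gen_subgroup_mult) simp_all
  from this[unfolded mat2_mult] have u: "mat2 1 (b/a) 0 1 \<in> proj_gen_subgroup S"
    by (rule proj_gen_subgroup_cong[where k = d]) (use W in simp_all)
  let ?\<rho> = "\<gamma> * a / b"
  have "mat2 ?\<rho> 0 0 1 ** mat2 1 (b/a) 0 1 ** mat2 (1/?\<rho>) 0 0 1 \<in> proj_gen_subgroup S"
    using T u False W by (intro proj_gen_subgroup_mult) simp_all
  then show ?thesis
    using False W by simp
qed

lemma proj_gen_subgroup_Bruhat:
  assumes T: "\<And>\<rho>. \<rho> \<noteq> 0 \<Longrightarrow> mat2 \<rho> 0 0 1 \<in> proj_gen_subgroup S"
    and U: "\<And>\<gamma>. mat2 1 \<gamma> 0 1 \<in> proj_gen_subgroup S"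
    and X: "mat2 p q r y \<in> proj_gen_subgroup S" "r \<noteq> 0" "p*y - q*r \<noteq> 0"
    and M: "m1*m4 - m2*m3 \<noteq> 0"
  shows "mat2 m1 m2 m3 m4 \<in> proj_gen_subgroup S"
proof -
  let ?e = "q - p*y/r"
  have e: "?e \<noteq> 0"
    using X by (simp add: field_simps)
  have "mat2 (r/?e) 0 0 1 ** (mat2 1 (-p/r) 0 1 ** mat2 p q r y ** mat2 1 (-y/r) 0 1)
          \<in> proj_gen_subgroup S"
    using T U X e by (intro proj_gen_subgroup_mult) simp_all
  from this[unfolded mat2_mult] have w: "mat2 0 1 1 0 \<in> proj_gen_subgroup S"
    by (rule proj_gen_subgroup_cong[where k = r])
      (use X e in \<open>simp_all add: field_simps\<close>)
  have L: "mat2 1 0 g 1 \<in> proj_gen_subgroup S" for g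
    using proj_gen_subgroup_mult[OF proj_gen_subgroup_mult[OF w U[of g]] w] by simp
  have LDU: "mat2 n1 n2 n3 n4 \<in> proj_gen_subgroup S" if n: "n1 \<noteq> 0" "n1*n4 - n2*n3 \<noteq> 0" for n1 n2 n3 n4
  proof -
    let ?\<delta> = "(n1*n4 - n2*n3) / n1"
    have "mat2 (n1/?\<delta>) 0 0 1 \<in> proj_gen_subgroup S"
      using T n by simp
    then have "mat2 n1 0 0 ?\<delta> \<in> proj_gen_subgroup S"
      by (rule proj_gen_subgroup_cong[where k = "1/?\<delta>"]) (use n in simp_all)
    then have "mat2 1 0 (n3/n1) 1 ** mat2 n1 0 0 ?\<delta> ** mat2 1 (n2/n1) 0 1 \<in> proj_gen_subgroup S"
      using L U by (intro proj_gen_subgroup_mult)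
    then show ?thesis
      using n by (simp add: field_simps)
  qed
  show ?thesis
  proof (cases "m1 = 0")
    case False
    then show ?thesis using LDU M by simp
  next
    case True
    then have "mat2 m3 m4 m1 m2 \<in> proj_gen_subgroup S"
      using LDU M by (simp add: algebra_simps)
    then show ?thesis
      using proj_gen_subgroup_mult[OF w] by fastforce
  qed
qed

lemma GL2_subset_proj_gen_subgroup:
  assumes T: "\<And>\<rho>. \<rho> \<noteq> 0 \<Longrightarrow> mat2 \<rho> 0 0 1 \<in> proj_gen_subgroup S"
    and X: "mat2 p q r y \<in> proj_gen_subgroup S"
    and nz: "p \<noteq> 0" "q \<noteq> 0" "r \<noteq> 0" "y \<noteq> 0" "p*y - q*r \<noteq> 0"
  shows "GL2 \<subseteq> proj_gen_subgroup S"
proof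
  fix A
  assume "A \<in> GL2"
  then have det: "A$1$1 * A$2$2 - A$1$2 * A$2$1 \<noteq> 0"
    by (simp add: GL2_def invertible_det_nz det_2)
  obtain a b d where W: "mat2 a b 0 d \<in> proj_gen_subgroup S" "b \<noteq> 0" "a * d \<noteq> 0"
    using proj_gen_subgroup_upper_triangular[OF T X nz] by blast
  have U: "mat2 1 \<gamma> 0 1 \<in> proj_gen_subgroup S" for \<gamma>
    using proj_gen_subgroup_unipotent[OF T W] .
  have "mat2 (A$1$1) (A$1$2) (A$2$1) (A$2$2) \<in> proj_gen_subgroup S"
    using T U X nz(3,5) det by (rule proj_gen_subgroup_Bruhat)
  then show "A \<in> proj_gen_subgroup S"
    by (simp only: mat2_entries)
qed

section \<open>Values of a rational function\<close>

lemma finite_degree_diff_smult_eq_0: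
  fixes N D :: "'a::field poly"
  assumes "degree N > 0 \<or> degree D > 0"
  shows "finite {\<rho>. degree (N - smult \<rho> D) = 0}"
proof -
  let ?P = "\<lambda>\<rho>. N - smult \<rho> D"
  have uniq: "\<rho>\<^sub>1 = \<rho>\<^sub>2" if "degree (?P \<rho>\<^sub>1) = 0" "degree (?P \<rho>\<^sub>2) = 0" for \<rho>\<^sub>1 \<rho>\<^sub>2
  proof (rule ccontr)
    assume "\<rho>\<^sub>1 \<noteq> \<rho>\<^sub>2"
    have "degree (smult (\<rho>\<^sub>2 - \<rho>\<^sub>1) D) = degree (?P \<rho>\<^sub>1 - ?P \<rho>\<^sub>2)"
      by (simp add: smult_diff_left)
    also have "degree (?P \<rho>\<^sub>1 - ?P \<rho>\<^sub>2) = 0"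
      using that degree_diff_le[of "?P \<rho>\<^sub>1" 0 "?P \<rho>\<^sub>2"] by simp
    finally have "degree D = 0"
      using \<open>\<rho>\<^sub>1 \<noteq> \<rho>\<^sub>2\<close> by simp
    moreover have "N = ?P \<rho>\<^sub>1 + smult \<rho>\<^sub>1 D"
      by simp
    then have "degree N = 0"
      using that(1) \<open>degree D = 0\<close> degree_add_le[of "?P \<rho>\<^sub>1" 0 "smult \<rho>\<^sub>1 D"] by simp
    ultimately show False
      using assms by simp
  qed
  show ?thesis
  proof (cases "{\<rho>. degree (?P \<rho>) = 0} = {}")
    case False
    then obtain \<rho>\<^sub>0 where "degree (?P \<rho>\<^sub>0) = 0"
      by blast
    then have "{\<rho>. degree (?P \<rho>) = 0} \<subseteq> {\<rho>\<^sub>0}"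
      using uniq by blast
    then show ?thesis
      by (rule finite_subset) simp
  next
    case True
    then show ?thesis
      by (simp only: finite.emptyI)
  qed
qed

lemma coprime_rational_function_cofinite_range:
  fixes N D :: "'a::alg_closed_field poly"
  assumes coprime: "coprime N D" and nonconst: "degree N > 0 \<or> degree D > 0" and "finite Bad"
  shows "finite (UNIV - (\<lambda>z. poly N z / poly D z) ` {z. z \<notin> Bad \<and> poly D z \<noteq> 0})"
proof -
  let ?P = "\<lambda>\<rho>. N - smult \<rho> D"
  have sub: "UNIV - (\<lambda>z. poly N z / poly D z) ` {z. z \<notin> Bad \<and> poly D z \<noteq> 0}
      \<subseteq> {\<rho>. degree (?P \<rho>) = 0} \<union> (\<lambda>z. poly N z / poly D z) ` Bad"
  proof
    fix \<rho>
    assume \<rho>: "\<rho> \<in> UNIV - (\<lambda>z. poly N z / poly D z) ` {z. z \<notin> Bad \<and> poly D z \<noteq> 0}"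
    show "\<rho> \<in> {\<rho>. degree (?P \<rho>) = 0} \<union> (\<lambda>z. poly N z / poly D z) ` Bad"
    proof (rule ccontr)
      assume "\<rho> \<notin> {\<rho>. degree (?P \<rho>) = 0} \<union> (\<lambda>z. poly N z / poly D z) ` Bad"
      then have deg: "degree (?P \<rho>) > 0" and notBad: "\<rho> \<notin> (\<lambda>z. poly N z / poly D z) ` Bad"
        by auto
      obtain z where "poly (?P \<rho>) z = 0"
        using alg_closed_imp_poly_has_root[OF deg] by blast
      then have Nz: "poly N z = \<rho> * poly D z"
        by simp
      then have Dz: "poly D z \<noteq> 0"
        using coprime_poly_0[OF coprime, of z] by auto
      then have "\<rho> = poly N z / poly D z"
        using Nz by simp
      then show False
        using \<rho> notBad Dz by blast
    qed
  qed
  moreover have "finite ({\<rho>. degree (?P \<rho>) = 0} \<union> (\<lambda>z. poly N z / poly D z) ` Bad)"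
    using finite_degree_diff_smult_eq_0[OF nonconst] \<open>finite Bad\<close> by simp
  ultimately show ?thesis
    by (rule finite_subset)
qed

lemma rational_function_cofinite_range:
  fixes N D :: "'a::{alg_closed_field, field_gcd} poly"
  assumes "N \<noteq> 0" "poly N z\<^sub>0 = 0" "poly D z\<^sub>0 \<noteq> 0" "finite Bad"
  shows "finite (UNIV - (\<lambda>z. poly N z / poly D z) ` {z. z \<notin> Bad \<and> poly D z \<noteq> 0})"
proof -
  define G where "G = gcd N D"
  define N' D' where "N' = N div G" and "D' = D div G"
  have N: "N = G * N'" and D: "D = G * D'"
    unfolding G_def N'_def D'_def by simp_all
  have "G \<noteq> 0"
    using assms(1) unfolding G_def by simp
  have "coprime N' D'"
    unfolding N'_def D'_def G_def using assms(1) by (intro div_gcd_coprime) simp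
  moreover have "degree N' > 0 \<or> degree D' > 0"
  proof (rule ccontr)
    assume "\<not> ?thesis"
    then obtain c where "N' = [:c:]"
      using degree_eq_zeroE by blast
    moreover have "poly N' z\<^sub>0 = 0"
      using assms(2,3) unfolding N D by simp
    ultimately have "N' = 0"
      by simp
    then show False
      using assms(1) N by simp
  qed
  moreover have "finite (Bad \<union> {z. poly G z = 0})"
    using assms(4) poly_roots_finite[OF \<open>G \<noteq> 0\<close>] by simp
  ultimately have fin': "finite (UNIV - (\<lambda>z. poly N' z / poly D' z) `
                                     {z. z \<notin> Bad \<union> {z. poly G z = 0} \<and> poly D' z \<noteq> 0})"
    by (rule coprime_rational_function_cofinite_range)
  have "(\<lambda>z. poly N' z / poly D' z) ` {z. z \<notin> Bad \<union> {z. poly G z = 0} \<and> poly D' z \<noteq> 0}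
      \<subseteq> (\<lambda>z. poly N z / poly D z) ` {z. z \<notin> Bad \<and> poly D z \<noteq> 0}"
  proof
    fix \<rho>
    assume "\<rho> \<in> (\<lambda>z. poly N' z / poly D' z) ` {z. z \<notin> Bad \<union> {z. poly G z = 0} \<and> poly D' z \<noteq> 0}"
    then obtain z where z: "z \<notin> Bad" "poly G z \<noteq> 0" "poly D' z \<noteq> 0" "\<rho> = poly N' z / poly D' z"
      by auto
    then have "poly D z \<noteq> 0" "\<rho> = poly N z / poly D z"
      unfolding N D by simp_all
    then show "\<rho> \<in> (\<lambda>z. poly N z / poly D z) ` {z. z \<notin> Bad \<and> poly D z \<noteq> 0}"
      using z(1) by blast
  qed
  then show ?thesis
    using finite_subset[OF Diff_mono[OF subset_refl] fin'] by blast
qed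

section \<open>The diagonal torus lies in the group generated by the g(s)\<close>

lemma proj_gen_subgroup_diagonal_of_cofinite:
  assumes "finite F" and T: "\<And>\<rho>. \<rho> \<noteq> 0 \<Longrightarrow> \<rho> \<notin> F \<Longrightarrow> mat2 \<rho> 0 0 1 \<in> proj_gen_subgroup S"
    and "\<rho> \<noteq> 0"
  shows "mat2 \<rho> 0 0 1 \<in> proj_gen_subgroup S"
proof -
  have "finite (F \<union> {0} \<union> (\<lambda>f. \<rho>/f) ` F)"
    using \<open>finite F\<close> by simp
  then obtain r where r: "r \<notin> F \<union> {0} \<union> (\<lambda>f. \<rho>/f) ` F"
    using ex_new_if_finite[OF infinite_UNIV_char_0] by metis
  have "\<rho>/r \<notin> F"
  proof
    assume "\<rho>/r \<in> F"
    then have "\<rho>/(\<rho>/r) \<in> (\<lambda>f. \<rho>/f) ` F"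
      by (rule imageI)
    then show False
      using r \<open>\<rho> \<noteq> 0\<close> by simp
  qed
  then have "mat2 r 0 0 1 ** mat2 (\<rho>/r) 0 0 1 \<in> proj_gen_subgroup S"
    using r \<open>\<rho> \<noteq> 0\<close> by (intro proj_gen_subgroup_mult T) auto
  then show ?thesis
    using r by simp
qed

lemma gmat_in_proj_gen_subgroup:
  "s \<notin> {0, 1, x} \<Longrightarrow> gmat t x s \<in> proj_gen_subgroup (gmat t x ` (UNIV - {0, 1, x}))"
  by (rule proj_gen_subgroup_gen) blast

lemma gmat_word_eq_diagonal:
  fixes x l a :: complex
  defines "t \<equiv> x*(l^2 - l + 1)/l"
  defines "B \<equiv> (1-l)*a + l - x" and "C \<equiv> (1-x*l)*a + x*(l-1)"
  assumes "l \<noteq> 0" "B \<noteq> 0"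
  shows "gmat t x (a/l) ** mat2 (a*(a-x)) (-(t*a*(a-1))) (a-x) (-(a-1)*x) ** gmat t x (C/B) =
         mat (x*a*(a-1)*(a-x)*(x-1)*(l-1)^3 / (l^3*B^2)) ** mat2 (x*(a-l)*B) 0 0 (l*(a-x*l)*C)"
proof -
  let ?M = "mat2 (-x*(a-x)*(a-l)) (x^2*(a-1)*(l^2-l+1)*(a-l)) (-(a-x)*l*(a-x*l)) (x*l^2*(a-1)*(a-x*l))"
  let ?G = "mat2 (-(C-B)*x*B*l) (x*(l^2-l+1)*C*(C-B)) (-(C-x*B)*B*l) (C*(C-x*B)*l)"
  have "gmat t x (a/l) ** mat2 (a*(a-x)) (-(t*a*(a-1))) (a-x) (-(a-1)*x) = mat (a*(l-1)/l^3) ** ?M"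
    unfolding gmat_eq_mat2 mat_eq_mat2 t_def using assms(4)
    by (simp add: field_simps power2_eq_square power3_eq_cube)
  moreover have "gmat t x (C/B) = mat (1/(B^2*l)) ** ?G"
    unfolding gmat_eq_mat2 mat_eq_mat2 t_def using assms(4,5)
    by (simp add: field_simps power2_eq_square)
  ultimately have "gmat t x (a/l) ** mat2 (a*(a-x)) (-(t*a*(a-1))) (a-x) (-(a-1)*x) ** gmat t x (C/B) =
                   (mat (a*(l-1)/l^3) ** ?M) ** (mat (1/(B^2*l)) ** ?G)"
    by simp
  also have "\<dots> = mat (a*(l-1)/l^3 * (1/(B^2*l))) ** (?M ** ?G)"
    by (rule mat_scalar_mult_mult)
  also have "?M ** ?G = mat (x*(a-1)*(a-x)*(x-1)*l*(l-1)^2) ** mat2 (x*(a-l)*B) 0 0 (l*(a-x*l)*C)"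
    unfolding mat_eq_mat2 B_def C_def by simp algebra+
  also note mat_mult_mat_mult
  also have "a*(l-1)/l^3 * (1/(B^2*l)) * (x*(a-1)*(a-x)*(x-1)*l*(l-1)^2) =
             x*a*(a-1)*(a-x)*(x-1)*(l-1)^3 / (l^3*B^2)"
    using assms(4,5) by (simp add: field_simps power2_eq_square power3_eq_cube)
  finally show ?thesis .
qed

lemma gmat_word_diagonal:
  fixes x l a :: complex
  defines "t \<equiv> x*(l^2 - l + 1)/l"
  defines "B \<equiv> (1-l)*a + l - x" and "C \<equiv> (1-x*l)*a + x*(l-1)"
  assumes l: "l \<noteq> 0" "l \<noteq> 1" and x: "x \<noteq> 0" "x \<noteq> 1" and a: "a \<notin> {0, 1, x}"
    and nz: "x*(a-l)*B \<noteq> 0" "l*(a-x*l)*C \<noteq> 0"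
  shows "mat2 (x*(a-l)*B) 0 0 (l*(a-x*l)*C) \<in> proj_gen_subgroup (gmat t x ` (UNIV - {0, 1, x}))"
proof -
  let ?H = "proj_gen_subgroup (gmat t x ` (UNIV - {0, 1, x}))"
  have B: "B \<noteq> 0" and C: "C \<noteq> 0"
    using nz by auto
  have "C - B = l*(1-x)*(a-1)" "C - x*B = (1-x)*(a-x)"
    unfolding B_def C_def by (simp_all add: algebra_simps)
  then have "C \<noteq> B" "C \<noteq> x*B"
    using a l x by auto
  then have "gmat t x (C/B) \<in> ?H"
    using B C by (intro gmat_in_proj_gen_subgroup) (auto simp: field_simps)
  moreover have "gmat t x (a/l) \<in> ?H"
    using a l nz by (intro gmat_in_proj_gen_subgroup) (auto simp: field_simps)
  moreover have "t - x = x*(l-1)^2/l"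
    unfolding t_def using l by (simp add: field_simps power2_eq_square)
  then have "det (gmat t x a) \<noteq> 0"
    unfolding det_gmat using a l x by simp
  then have "mat2 (a*(a-x)) (-(t*a*(a-1))) (a-x) (-(a-1)*x) \<in> ?H"
    using proj_gen_subgroup_adjugate[OF gmat_in_proj_gen_subgroup[OF a, unfolded gmat_eq_mat2]]
    by (simp add: gmat_eq_mat2 det_mat2)
  ultimately have "gmat t x (a/l) ** mat2 (a*(a-x)) (-(t*a*(a-1))) (a-x) (-(a-1)*x) ** gmat t x (C/B) \<in> ?H"
    by (intro proj_gen_subgroup_mult)
  also have "gmat t x (a/l) ** mat2 (a*(a-x)) (-(t*a*(a-1))) (a-x) (-(a-1)*x) ** gmat t x (C/B) =
             mat (x*a*(a-1)*(a-x)*(x-1)*(l-1)^3 / (l^3*B^2)) ** mat2 (x*(a-l)*B) 0 0 (l*(a-x*l)*C)"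
    unfolding t_def B_def C_def using l(1) B unfolding B_def by (rule gmat_word_eq_diagonal)
  finally show ?thesis
    using a l x B by (elim proj_gen_subgroup_scale) simp
qed

lemma gmat_proj_gen_subgroup_diagonal:
  fixes x l \<rho> :: complex
  assumes l: "l \<noteq> 0" "l \<noteq> 1" and x: "x \<noteq> 0" "x \<noteq> 1" and lt: "x*(l^2 - l + 1) \<noteq> l"
    and "\<rho> \<noteq> 0"
  shows "mat2 \<rho> 0 0 1 \<in> proj_gen_subgroup (gmat (x*(l^2 - l + 1)/l) x ` (UNIV - {0, 1, x}))"
proof -
  let ?H = "proj_gen_subgroup (gmat (x*(l^2 - l + 1)/l) x ` (UNIV - {0, 1, x}))"
  define N where "N = smult x ([:-l, 1:] * [:l - x, 1 - l:])"
  define D where "D = smult l ([:-(x*l), 1:] * [:x*(l-1), 1 - x*l:])"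
  have poly_N: "poly N a = x*(a-l)*((1-l)*a + l - x)" for a
    unfolding N_def by (simp add: algebra_simps)
  have poly_D: "poly D a = l*(a-x*l)*((1-x*l)*a + x*(l-1))" for a
    unfolding D_def by (simp add: algebra_simps)
  have "N \<noteq> 0"
    unfolding N_def using x l by simp
  moreover have "poly N l = 0"
    unfolding poly_N by simp
  moreover have "poly D l = l*l*(1-x)*(l - x*(l^2 - l + 1))"
    unfolding poly_D by (simp add: algebra_simps power2_eq_square)
  then have "poly D l \<noteq> 0"
    using l x lt by simp
  ultimately have fin: "finite (UNIV - (\<lambda>z. poly N z / poly D z) ` {z. z \<notin> {0, 1, x} \<and> poly D z \<noteq> 0})"
    using rational_function_cofinite_range[of N l D "{0, 1, x}"] by simp
  show ?thesis
  proof (rule proj_gen_subgroup_diagonal_of_cofinite[OF fin _ \<open>\<rho> \<noteq> 0\<close>])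
    fix \<sigma> :: complex
    assume "\<sigma> \<noteq> 0" "\<sigma> \<notin> UNIV - (\<lambda>z. poly N z / poly D z) ` {z. z \<notin> {0, 1, x} \<and> poly D z \<noteq> 0}"
    then obtain a where a: "a \<notin> {0, 1, x}" "poly D a \<noteq> 0" "\<sigma> = poly N a / poly D a"
      by blast
    then have "poly N a \<noteq> 0"
      using \<open>\<sigma> \<noteq> 0\<close> by simp
    then have "mat2 (poly N a) 0 0 (poly D a) \<in> ?H"
      unfolding poly_N poly_D using l x a by (intro gmat_word_diagonal) (simp_all add: poly_D[symmetric])
    then show "mat2 \<sigma> 0 0 1 \<in> ?H"
      by (rule proj_gen_subgroup_cong[where k = "poly D a"]) (use a in simp_all)
  qed
qed

section \<open>The quotient topology on PGL(2)\<close>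

lemma equiv_proj_rel: "equiv GL2 proj_rel"
proof (rule equivI)
  show "proj_rel \<subseteq> GL2 \<times> GL2"
    unfolding proj_rel_def by auto
  show "refl_on GL2 proj_rel"
    unfolding refl_on_def proj_rel_def by (auto intro!: exI[of _ 1] simp: matrix_mul_lid)
  show "sym proj_rel"
  proof (rule symI)
    fix A B
    assume "(A, B) \<in> proj_rel"
    then obtain c where "A \<in> GL2" "B \<in> GL2" "c \<noteq> 0" "B = mat c ** A"
      unfolding proj_rel_def by blast
    moreover have "A = mat (1/c) ** (mat c ** A)"
      using \<open>c \<noteq> 0\<close> by (simp add: mat_mult_mat_mult matrix_mul_lid)
    ultimately show "(B, A) \<in> proj_rel"
      unfolding proj_rel_def by (intro CollectI case_prodI conjI exI[of _ "1/c"]) simp_all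
  qed
  show "trans proj_rel"
  proof (rule transI)
    fix A B C
    assume "(A, B) \<in> proj_rel" "(B, C) \<in> proj_rel"
    then obtain c d where "A \<in> GL2" "C \<in> GL2" "c \<noteq> 0" "d \<noteq> 0" "C = mat d ** (mat c ** A)"
      unfolding proj_rel_def by blast
    then show "(A, C) \<in> proj_rel"
      unfolding proj_rel_def by (intro CollectI case_prodI conjI exI[of _ "d*c"]) (simp_all add: mat_mult_mat_mult)
  qed
qed

lemma istopology_quotient:
  assumes "equiv A r"
  shows "istopology (\<lambda>U. U \<subseteq> A // r \<and> openin X (\<Union>U))"
  unfolding istopology_def
proof (rule conjI; intro allI impI)
  fix U V
  assume U: "U \<subseteq> A // r \<and> openin X (\<Union>U)" and V: "V \<subseteq> A // r \<and> openin X (\<Union>V)"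
  have "\<Union>(U \<inter> V) = \<Union>U \<inter> \<Union>V"
    using quotient_disj[OF assms] U V by blast
  then show "U \<inter> V \<subseteq> A // r \<and> openin X (\<Union>(U \<inter> V))"
    using U V by auto
next
  fix K
  assume K: "\<forall>U\<in>K. U \<subseteq> A // r \<and> openin X (\<Union>U)"
  have "\<Union>(\<Union>K) = (\<Union>U\<in>K. \<Union>U)"
    by blast
  moreover have "openin X (\<Union>U\<in>K. \<Union>U)"
    using K by (intro openin_Union) auto
  ultimately show "\<Union>K \<subseteq> A // r \<and> openin X (\<Union>(\<Union>K))"
    using K by auto
qed

lemma topspace_PGL2_top: "topspace PGL2_top \<subseteq> PGL2"
  unfolding topspace_def PGL2_top_def PGL2_def
  using topology_inverse'[OF istopology_quotient[OF equiv_proj_rel]] by auto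

lemma PGL2_subset_proj_image:
  assumes "GL2 \<subseteq> proj_gen_subgroup S"
  shows "PGL2 \<subseteq> proj ` gen_subgroup S"
proof
  fix P
  assume "P \<in> PGL2"
  then obtain A where A: "A \<in> GL2" "P = proj_rel `` {A}"
    unfolding PGL2_def by (auto elim: quotientE)
  then obtain k where k: "k \<noteq> 0" "mat k ** A \<in> gen_subgroup S"
    using assms unfolding proj_gen_subgroup_def by blast
  have "det (mat k ** A) \<noteq> 0"
    using A(1) k(1) by (simp add: GL2_def invertible_det_nz det_mul mat_eq_mat2 det_mat2)
  then have "(A, mat k ** A) \<in> proj_rel"
    unfolding proj_rel_def using A(1) k(1) by (auto simp: GL2_def invertible_det_nz)
  then have "P = proj (mat k ** A)"
    unfolding proj_def A(2) by (rule equiv_class_eq[OF equiv_proj_rel])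
  then show "P \<in> proj ` gen_subgroup S"
    using k(2) by blast
qed

lemma closure_of_proj_image_eq_topspace:
  assumes "GL2 \<subseteq> proj_gen_subgroup S"
  shows "PGL2_top closure_of (proj ` gen_subgroup S) = topspace PGL2_top"
proof -
  have "topspace PGL2_top \<inter> proj ` gen_subgroup S = topspace PGL2_top"
    using topspace_PGL2_top PGL2_subset_proj_image[OF assms] by blast
  then show ?thesis
    by (metis closure_of_restrict closure_of_topspace)
qed

lemma t_parametrization:
  fixes t x :: complex
  assumes "x \<noteq> t" "t \<notin> {0, 1}" "x \<notin> {0, 1}"
  obtains l where "l \<noteq> 0" "l \<noteq> 1" "t = x*(l^2 - l + 1)/l" "x*(l^2 - l + 1) \<noteq> l"
proof -
  obtain l where "poly [:x, -(t + x), x:] l = 0"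
    using alg_closed_imp_poly_has_root[of "[:x, -(t + x), x:]"] assms(3) by auto
  then have tl: "t*l = x*(l^2 - l + 1)"
    by (simp add: algebra_simps power2_eq_square)
  then have "l \<noteq> 0" "l \<noteq> 1"
    using assms by auto
  moreover have "t = x*(l^2 - l + 1)/l" "x*(l^2 - l + 1) \<noteq> l"
    using tl \<open>l \<noteq> 0\<close> assms(2) by (auto simp: field_simps)
  ultimately show ?thesis
    by (rule that)
qed

theorem lemma3p10:
  fixes t x :: complex
  assumes "x \<noteq> t" "t \<notin> {0, 1}" "x \<notin> {0, 1}"
  shows "PGL2_top closure_of (proj ` gen_subgroup (gmat t x ` (UNIV - {0, 1, x})))
           = topspace PGL2_top"
proof -
  let ?S = "gmat t x ` (UNIV - {0, 1, x})"
  obtain l where l: "l \<noteq> 0" "l \<noteq> 1" and t: "t = x*(l^2 - l + 1)/l" "x*(l^2 - l + 1) \<noteq> l"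
    using t_parametrization[OF assms] .
  have T: "mat2 \<rho> 0 0 1 \<in> proj_gen_subgroup ?S" if "\<rho> \<noteq> 0" for \<rho>
    using gmat_proj_gen_subgroup_diagonal[OF l _ _ t(2) that] assms unfolding t(1) by simp
  have "mat2 (-(t-1)*x) (t * t * (t-1)) (-(t-x)) (t * (t-x)) \<in> proj_gen_subgroup ?S"
    using gmat_in_proj_gen_subgroup[of t x t] assms by (simp add: gmat_eq_mat2)
  moreover have "-(t-1)*x * (t * (t-x)) - t * t * (t-1) * (-(t-x)) = t*(t-1)*(t-x)^2"
    by (simp add: algebra_simps power2_eq_square)
  ultimately have "GL2 \<subseteq> proj_gen_subgroup ?S"
    using assms by (intro GL2_subset_proj_gen_subgroup[OF T]) auto
  then show ?thesis
    by (rule closure_of_proj_image_eq_topspace)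
qed

end
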